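(* Let $k>4$ be an odd integer. Then for each $l\in\{2k-2,\,2k-4\}$ there exist permutations $g_1,g_2\in S(l)$ such that each of $g_1,g_2$ has only cycles of length $k$ or $1$, and $g_1g_2^{-1}$ has only cycles of even length.
   Context: $S(l)$ denotes the symmetric group on $\{1,\dots,l\}$. *)

theory Defs
  imports "HOL-Combinatorics.Combinatorics"
begin

text \<open>Cycle lengths of a permutation g of S: the length of the cycle through x is
  the cardinality of its orbit (fixed points give cycles of length 1).\<close>
definition cycle_lengths :: "(nat \<Rightarrow> nat) \<Rightarrow> nat set \<Rightarrow> nat set" where
  "cycle_lengths g S = (\<lambda>x. card (orbit g x)) ` S"

end

theory Submission
  imports Defs
begin

text \<open>Take \<open>g\<^sub>2 = (1 2 \<dots> k)\<close>, and \<open>g\<^sub>1 = (1 k+1 k+2 \<dots> 2k-2 2)\<close> for \<open>l = 2k-2\<close>, resp.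
  \<open>g\<^sub>1 = (1 3 k+1 \<dots> 2k-4 2 4)\<close> for \<open>l = 2k-4\<close>. Then \<open>g\<^sub>1 g\<^sub>2\<^sup>-\<^sup>1\<close> is
  \<open>(1 k k-1 \<dots> 3)(2 k+1 \<dots> 2k-2)\<close>, resp. \<open>(1 k k-1 \<dots> 5)(2 3 4 k+1 \<dots> 2k-4)\<close>, whose cycle
  lengths \<open>k-1, k-1\<close>, resp. \<open>k-3, k-1\<close>, are even because \<open>k\<close> is odd.\<close>

definition is_cycle_of :: "('a \<Rightarrow> 'a) \<Rightarrow> 'a list \<Rightarrow> bool" where
  "is_cycle_of g cs \<longleftrightarrow> distinct cs \<and> map g cs = rotate1 cs"

lemma is_cycle_of_fixpoint: "g x = x \<Longrightarrow> is_cycle_of g [x]"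
  by (simp add: is_cycle_of_def)

lemma map_funpow_is_cycle_of:
  assumes "is_cycle_of g cs"
  shows "map (g ^^ m) cs = rotate m cs"
proof (induction m)
  case (Suc m)
  have "map (g ^^ Suc m) cs = map g (rotate m cs)"
    using Suc by (simp flip: map_map)
  also have "\<dots> = rotate (Suc m) cs"
    using assms by (simp add: is_cycle_of_def rotate1_rotate_swap flip: rotate_map)
  finally show ?case .
qed simp

lemma orbit_is_cycle_of:
  assumes cyc: "is_cycle_of g cs" and x: "x \<in> set cs"
  shows "orbit g x = set cs"
proof -
  obtain i where i: "i < length cs" "x = cs ! i" using x by (auto simp: in_set_conv_nth)
  have pow: "(g ^^ m) x = cs ! ((m + i) mod length cs)" for m
    using map_funpow_is_cycle_of[OF cyc, of m] i
    by (metis length_map nth_map nth_rotate)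
  show ?thesis
  proof
    show "orbit g x \<subseteq> set cs"
      unfolding orbit_altdef pow using i(1) by (auto intro!: nth_mem mod_less_divisor)
    show "set cs \<subseteq> orbit g x"
    proof
      fix y assume "y \<in> set cs"
      then obtain j where j: "j < length cs" "y = cs ! j" by (auto simp: in_set_conv_nth)
      have "(g ^^ (length cs - i + j)) x = y"
        unfolding pow using i(1) j by simp
      then show "y \<in> orbit g x"
        using i by (auto simp: orbit_altdef intro!: exI[of _ "length cs - i + j"])
    qed
  qed
qed

lemma card_orbit_is_cycle_of:
  "is_cycle_of g cs \<Longrightarrow> x \<in> set cs \<Longrightarrow> card (orbit g x) = length cs"
  by (simp add: orbit_is_cycle_of is_cycle_of_def distinct_card)

lemma permutes_is_cycle_of:
  assumes cyc: "is_cycle_of g cs" and fixed: "\<And>x. x \<notin> set cs \<Longrightarrow> g x = x"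
  shows "g permutes set cs"
proof (rule bij_imp_permutes[OF _ fixed])
  have "g ` set cs = set cs"
    using cyc by (metis is_cycle_of_def set_map set_rotate1)
  then show "bij_betw g (set cs) (set cs)"
    by (simp add: bij_betw_def eq_card_imp_inj_on)
qed

lemma cycle_lengths_subsetI:
  assumes "\<And>x. x \<in> S \<Longrightarrow> \<exists>cs. is_cycle_of g cs \<and> x \<in> set cs \<and> length cs \<in> L"
  shows "cycle_lengths g S \<subseteq> L"
  using assms card_orbit_is_cycle_of by (fastforce simp: cycle_lengths_def)

lemma single_cycle_permutes:
  assumes "is_cycle_of g cs" and "\<And>x. x \<notin> set cs \<Longrightarrow> g x = x" and "set cs \<subseteq> S"
  shows "g permutes S"
  using permutes_subset[OF permutes_is_cycle_of[OF assms(1,2)] assms(3)] .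

lemma cycle_lengths_single_cycle:
  assumes cyc: "is_cycle_of g cs" and fixed: "\<And>x. x \<notin> set cs \<Longrightarrow> g x = x"
  shows "cycle_lengths g S \<subseteq> {length cs, 1}"
proof (rule cycle_lengths_subsetI)
  fix x
  show "\<exists>ds. is_cycle_of g ds \<and> x \<in> set ds \<and> length ds \<in> {length cs, 1}"
  proof (cases "x \<in> set cs")
    case False
    then have "is_cycle_of g [x]" by (simp add: fixed is_cycle_of_fixpoint)
    then show ?thesis by force
  qed (use cyc in auto)
qed

lemma ex_pair_with_even_ratio:
  assumes "g1 permutes S" "g2 permutes S"
    and "cycle_lengths g1 S \<subseteq> {k, 1}" "cycle_lengths g2 S \<subseteq> {k, 1}"
    and "g1 = h \<circ> g2" "cycle_lengths h S \<subseteq> Collect even"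
  shows "\<exists>g1 g2. g1 permutes S \<and> g2 permutes S \<and>
           cycle_lengths g1 S \<subseteq> {k, 1} \<and> cycle_lengths g2 S \<subseteq> {k, 1} \<and>
           (\<forall>c \<in> cycle_lengths (g1 \<circ> inv g2) S. even c)"
proof -
  have "g1 \<circ> inv g2 = h"
    using assms(2,5) by (simp add: comp_assoc permutes_inv_o)
  then show ?thesis using assms by blast
qed

text \<open>Stated inside a context \<open>a # _ @ ys\<close> so that it rewrites the rotation equation
  \<open>map g cs = rotate1 cs\<close> of a cycle list \<open>cs\<close> containing the run \<open>[a..<b]\<close>.\<close>

lemma map_upt_shift:
  assumes "a < b" and "\<And>x. a \<le> x \<Longrightarrow> Suc x < b \<Longrightarrow> g x = Suc x" and "g (b - 1) = c"
  shows "a # map g [a..<b] @ ys = [a..<b] @ c # ys"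
proof -
  obtain b' where b: "b = Suc b'" and "a \<le> b'" using assms(1) by (cases b) auto
  then have "map g [a..<b'] = map Suc [a..<b']" using assms(2) by (intro map_cong) auto
  then have "map g [a..<b] = [Suc a..<b] @ [c]"
    using b \<open>a \<le> b'\<close> assms(3) by (simp add: map_Suc_upt)
  then show ?thesis using assms(1) by (simp add: upt_conv_Cons)
qed

lemma map_rev_upt_shift:
  assumes "a \<le> b" and "\<And>x. a < x \<Longrightarrow> x \<le> b \<Longrightarrow> g x = x - 1" and "g a = c"
  shows "b # map g (rev [a..<Suc b]) @ ys = rev [a..<Suc b] @ c # ys"
proof -
  have "map g [Suc a..<Suc b] = map (\<lambda>x. x - 1) [Suc a..<Suc b]"
    using assms(2) by (intro map_cong) auto
  then have "map g [a..<Suc b] = c # [a..<b]"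
    using assms(1,3) by (simp add: upt_conv_Cons map_decr_upt del: upt_Suc)
  then have "map g (rev [a..<Suc b]) = rev [a..<b] @ [c]"
    by (simp add: rev_map[symmetric] del: upt_Suc)
  then show ?thesis using assms(1) by simp
qed

definition standard_cycle :: "nat \<Rightarrow> nat \<Rightarrow> nat" where
  "standard_cycle k x = (if 1 \<le> x \<and> x < k then x + 1 else if x = k then 1 else x)"

definition long_cycle_A :: "nat \<Rightarrow> nat \<Rightarrow> nat" where
  "long_cycle_A k x = (if x = 1 then k + 1 else if k + 1 \<le> x \<and> x < 2*k - 2 then x + 1
     else if x = 2*k - 2 then 2 else if x = 2 then 1 else x)"

definition ratio_A :: "nat \<Rightarrow> nat \<Rightarrow> nat" where
  "ratio_A k x = (if x = 1 then k else if 4 \<le> x \<and> x \<le> k then x - 1 else if x = 3 then 1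
     else if x = 2 then k + 1 else if k + 1 \<le> x \<and> x < 2*k - 2 then x + 1
     else if x = 2*k - 2 then 2 else x)"

definition long_cycle_B :: "nat \<Rightarrow> nat \<Rightarrow> nat" where
  "long_cycle_B k x = (if x = 1 then 3 else if x = 3 then k + 1
     else if k + 1 \<le> x \<and> x < 2*k - 4 then x + 1 else if x = 2*k - 4 then 2
     else if x = 2 then 4 else if x = 4 then 1 else x)"

definition ratio_B :: "nat \<Rightarrow> nat \<Rightarrow> nat" where
  "ratio_B k x = (if x = 1 then k else if 6 \<le> x \<and> x \<le> k then x - 1 else if x = 5 then 1
     else if x = 2 then 3 else if x = 3 then 4 else if x = 4 then k + 1
     else if k + 1 \<le> x \<and> x < 2*k - 4 then x + 1 else if x = 2*k - 4 then 2 else x)"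

lemma is_cycle_of_standard_cycle:
  assumes "0 < k"
  shows "is_cycle_of (standard_cycle k) [1..<Suc k]"
proof -
  have "1 # map (standard_cycle k) [1..<Suc k] @ [] = [1..<Suc k] @ [1]"
    by (rule map_upt_shift) (use assms in \<open>auto simp: standard_cycle_def\<close>)
  then show ?thesis
    using assms by (simp add: is_cycle_of_def upt_conv_Cons del: upt_Suc)
qed

lemma standard_cycle_is_k_cycle:
  assumes "0 < k" "k \<le> l"
  shows "standard_cycle k permutes {1..l}" "cycle_lengths (standard_cycle k) {1..l} \<subseteq> {k, 1}"
proof -
  note cyc = is_cycle_of_standard_cycle[OF assms(1)]
  have fixed: "standard_cycle k x = x" if "x \<notin> set [1..<Suc k]" for x
    using that assms by (auto simp: standard_cycle_def)
  show "standard_cycle k permutes {1..l}"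
    by (rule single_cycle_permutes[OF cyc fixed]) (use assms in auto)
  show "cycle_lengths (standard_cycle k) {1..l} \<subseteq> {k, 1}"
    using cycle_lengths_single_cycle[OF cyc fixed] by (simp del: upt_Suc)
qed

context
  fixes k :: nat
  assumes k: "4 < k"
begin

lemma is_cycle_of_long_cycle_A: "is_cycle_of (long_cycle_A k) (1 # [Suc k..<2*k-1] @ [2])"
proof -
  have "Suc k # map (long_cycle_A k) [Suc k..<2*k-1] @ ys = [Suc k..<2*k-1] @ 2 # ys" for ys
    by (rule map_upt_shift) (use k in \<open>auto simp: long_cycle_A_def\<close>)
  then show ?thesis
    using k by (simp add: is_cycle_of_def long_cycle_A_def)
qed

lemma long_cycle_A_is_k_cycle:
  shows "long_cycle_A k permutes {1..2*k-2}" "cycle_lengths (long_cycle_A k) {1..2*k-2} \<subseteq> {k, 1}"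
proof -
  note cyc = is_cycle_of_long_cycle_A
  have fixed: "long_cycle_A k x = x" if "x \<notin> set (1 # [Suc k..<2*k-1] @ [2])" for x
    using that k by (auto simp: long_cycle_A_def)
  show "long_cycle_A k permutes {1..2*k-2}"
    by (rule single_cycle_permutes[OF cyc fixed]) (use k in auto)
  have len: "length (1 # [Suc k..<2*k-1] @ [2]) = k" using k by simp
  show "cycle_lengths (long_cycle_A k) {1..2*k-2} \<subseteq> {k, 1}"
    using cycle_lengths_single_cycle[OF cyc fixed, unfolded len] .
qed

lemma is_cycle_of_ratio_A:
  shows "is_cycle_of (ratio_A k) (1 # rev [3..<Suc k])"
    and "is_cycle_of (ratio_A k) (2 # [Suc k..<2*k-1])"
proof -
  have "k # map (ratio_A k) (rev [3..<Suc k]) @ [] = rev [3..<Suc k] @ [1]"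
    by (rule map_rev_upt_shift) (use k in \<open>auto simp: ratio_A_def\<close>)
  then show "is_cycle_of (ratio_A k) (1 # rev [3..<Suc k])"
    using k by (simp add: is_cycle_of_def ratio_A_def del: upt_Suc)
  have "Suc k # map (ratio_A k) [Suc k..<2*k-1] @ [] = [Suc k..<2*k-1] @ [2]"
    by (rule map_upt_shift) (use k in \<open>auto simp: ratio_A_def\<close>)
  then show "is_cycle_of (ratio_A k) (2 # [Suc k..<2*k-1])"
    using k by (simp add: is_cycle_of_def ratio_A_def)
qed

lemma cycle_lengths_ratio_A: "cycle_lengths (ratio_A k) {1..2*k-2} \<subseteq> {k - 1}"
proof (rule cycle_lengths_subsetI)
  fix x assume "x \<in> {1..2*k-2}"
  then have "x \<in> set (1 # rev [3..<Suc k]) \<or> x \<in> set (2 # [Suc k..<2*k-1])" by auto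
  then show "\<exists>cs. is_cycle_of (ratio_A k) cs \<and> x \<in> set cs \<and> length cs \<in> {k - 1}"
    using is_cycle_of_ratio_A k by fastforce
qed

lemma long_cycle_A_eq: "long_cycle_A k = ratio_A k \<circ> standard_cycle k"
proof
  fix x
  consider "x = 0" | "x = 1" | "x = 2" | "x = 3" | "4 \<le> x \<and> x < k" | "x = k" | "k < x"
    by linarith
  then show "long_cycle_A k x = (ratio_A k \<circ> standard_cycle k) x"
    using k by cases (auto simp: long_cycle_A_def ratio_A_def standard_cycle_def)
qed

lemma is_cycle_of_long_cycle_B: "is_cycle_of (long_cycle_B k) (1 # 3 # [Suc k..<2*k-3] @ [2, 4])"
proof -
  have "Suc k # map (long_cycle_B k) [Suc k..<2*k-3] @ ys = [Suc k..<2*k-3] @ 2 # ys" for ys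
    by (rule map_upt_shift) (use k in \<open>auto simp: long_cycle_B_def\<close>)
  then show ?thesis
    using k by (auto simp: is_cycle_of_def long_cycle_B_def)
qed

lemma long_cycle_B_is_k_cycle:
  shows "long_cycle_B k permutes {1..2*k-4}" "cycle_lengths (long_cycle_B k) {1..2*k-4} \<subseteq> {k, 1}"
proof -
  note cyc = is_cycle_of_long_cycle_B
  have fixed: "long_cycle_B k x = x" if "x \<notin> set (1 # 3 # [Suc k..<2*k-3] @ [2, 4])" for x
    using that k by (auto simp: long_cycle_B_def)
  show "long_cycle_B k permutes {1..2*k-4}"
    by (rule single_cycle_permutes[OF cyc fixed]) (use k in auto)
  have len: "length (1 # 3 # [Suc k..<2*k-3] @ [2, 4]) = k" using k by simp
  show "cycle_lengths (long_cycle_B k) {1..2*k-4} \<subseteq> {k, 1}"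
    using cycle_lengths_single_cycle[OF cyc fixed, unfolded len] .
qed

lemma is_cycle_of_ratio_B:
  shows "is_cycle_of (ratio_B k) (1 # rev [5..<Suc k])"
    and "is_cycle_of (ratio_B k) ([2, 3, 4] @ [Suc k..<2*k-3])"
proof -
  have "k # map (ratio_B k) (rev [5..<Suc k]) @ [] = rev [5..<Suc k] @ [1]"
    by (rule map_rev_upt_shift) (use k in \<open>auto simp: ratio_B_def\<close>)
  then show "is_cycle_of (ratio_B k) (1 # rev [5..<Suc k])"
    using k by (simp add: is_cycle_of_def ratio_B_def del: upt_Suc)
  have "Suc k # map (ratio_B k) [Suc k..<2*k-3] @ [] = [Suc k..<2*k-3] @ [2]"
    by (rule map_upt_shift) (use k in \<open>auto simp: ratio_B_def\<close>)
  then show "is_cycle_of (ratio_B k) ([2, 3, 4] @ [Suc k..<2*k-3])"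
    using k by (simp add: is_cycle_of_def ratio_B_def)
qed

lemma cycle_lengths_ratio_B: "cycle_lengths (ratio_B k) {1..2*k-4} \<subseteq> {k - 3, k - 1}"
proof (rule cycle_lengths_subsetI)
  fix x assume "x \<in> {1..2*k-4}"
  then have "x \<in> set (1 # rev [5..<Suc k]) \<or> x \<in> set ([2, 3, 4] @ [Suc k..<2*k-3])" by auto
  then show "\<exists>cs. is_cycle_of (ratio_B k) cs \<and> x \<in> set cs \<and> length cs \<in> {k - 3, k - 1}"
    using is_cycle_of_ratio_B k by fastforce
qed

lemma long_cycle_B_eq: "long_cycle_B k = ratio_B k \<circ> standard_cycle k"
proof
  fix x
  consider "x = 0" | "x = 1" | "x = 2" | "x = 3" | "x = 4" | "x = 5" | "6 \<le> x \<and> x < k"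
    | "x = k" | "k < x \<and> x < 2*k - 4" | "2*k - 4 \<le> x"
    by linarith
  then show "long_cycle_B k x = (ratio_B k \<circ> standard_cycle k) x"
    using k by cases (auto simp: long_cycle_B_def ratio_B_def standard_cycle_def)
qed

end

theorem mainTheorem10:
  fixes k :: nat
  assumes "odd k" and "k > 4"
  shows "\<forall>l \<in> {2*k - 2, 2*k - 4}. \<exists>g1 g2.
           g1 permutes {1..l} \<and> g2 permutes {1..l} \<and>
           cycle_lengths g1 {1..l} \<subseteq> {k, 1} \<and>
           cycle_lengths g2 {1..l} \<subseteq> {k, 1} \<and>
           (\<forall>c \<in> cycle_lengths (g1 \<circ> inv g2) {1..l}. even c)"
proof -
  note k = \<open>k > 4\<close>
  have "0 < k" "k \<le> 2*k - 2" "k \<le> 2*k - 4" using k by auto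
  note standard_A = standard_cycle_is_k_cycle[OF this(1,2)]
    and standard_B = standard_cycle_is_k_cycle[OF this(1,3)]
  have "even (k - 1)" "even (k - 3)" using assms by auto
  then have even_A: "cycle_lengths (ratio_A k) {1..2*k-2} \<subseteq> Collect even"
    and even_B: "cycle_lengths (ratio_B k) {1..2*k-4} \<subseteq> Collect even"
    using cycle_lengths_ratio_A[OF k] cycle_lengths_ratio_B[OF k] by auto
  show ?thesis
    using ex_pair_with_even_ratio[OF long_cycle_A_is_k_cycle(1)[OF k] standard_A(1)
        long_cycle_A_is_k_cycle(2)[OF k] standard_A(2) long_cycle_A_eq[OF k] even_A]
      ex_pair_with_even_ratio[OF long_cycle_B_is_k_cycle(1)[OF k] standard_B(1)
        long_cycle_B_is_k_cycle(2)[OF k] standard_B(2) long_cycle_B_eq[OF k] even_B]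
    by simp
qed

end
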